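(* Let $\varepsilon>0$. Let $(G,\sigma)$ be a finite connected signed graph satisfying $CD^{\sigma}(K,N)$ with $K\in\mathbb{R}$ and $N\in(0,\infty]$ such that $N>\frac{4}{(2+\varepsilon)^2}$, and let $\lambda^{\sigma}$ be a nonzero eigenvalue of $\Delta^\sigma$. Then \[ \lambda^{\sigma}\geq\frac{\varepsilon}{(2+\varepsilon)^{2}-\frac{4}{N}}\cdot\frac{1}{d(D+1)\lceil (D+1)/2\rceil}+\frac{2(2+\varepsilon)}{(2+\varepsilon)^{2}-\frac{4}{N}}K, \] where $d$ is the maximal vertex degree and $D$ the diameter of $G$. Moreover, if the multiplicity of $\lambda^\sigma$ is at least $2$ or $(G,\sigma)$ is balanced, then \[ \lambda^{\sigma}\geq\frac{\varepsilon}{(2+\varepsilon)^{2}-\frac{4}{N}}\cdot\frac{1}{dD\lceil D/2\rceil}+\frac{2(2+\varepsilon)}{(2+\varepsilon)^{2}-\frac{4}{N}}K. \] (Convention $\frac1N=0$ if $N=\infty$.)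
   Context: $G=(V,E)$ is a finite simple connected graph with degrees $d_x$; $\sigma:E\to\{\pm1\}$, $\sigma_{xy}=\sigma(\{x,y\})$. $(G,\sigma)$ is balanced if the product of signs along every cycle is $+1$. Signed Laplacian $\Delta^{\sigma}f(x)=\frac{1}{d_x}\sum_{y\sim x}(\sigma_{xy}f(y)-f(x))$; $\Delta$ is the case $\sigma\equiv+1$; $\lambda$ is an eigenvalue of $\Delta^\sigma$ if $-\Delta^\sigma f=\lambda f$ for some nonzero $f$. $\Gamma^{\sigma}(f,g)=\frac12\{\Delta(fg)-g\Delta^{\sigma}f-f\Delta^{\sigma}g\}$, $\Gamma_2^{\sigma}(f,g)=\frac12\{\Delta\Gamma^{\sigma}(f,g)-\Gamma^{\sigma}(g,\Delta^{\sigma}f)-\Gamma^{\sigma}(f,\Delta^{\sigma}g)\}$. $CD^{\sigma}(K,N)$ means $\Gamma_2^{\sigma}(f,f)(x)\ge\frac1N(\Delta^\sigma f)^2(x)+K\Gamma^\sigma(f,f)(x)$ for all $f:V\to\mathbb{R}$ and all $x\in V$. $\lceil\cdot\rceil$ is the ceiling function. *)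

theory Defs
  imports "HOL-Analysis.Analysis"
begin

definition simple_graph :: "'a set \<Rightarrow> ('a \<Rightarrow> 'a \<Rightarrow> bool) \<Rightarrow> bool" where
  "simple_graph V E \<longleftrightarrow> finite V \<and> V \<noteq> {} \<and>
     (\<forall>x y. E x y \<longrightarrow> x \<in> V \<and> y \<in> V) \<and>
     (\<forall>x y. E x y \<longrightarrow> E y x) \<and> (\<forall>x. \<not> E x x)"

definition connected_graph :: "'a set \<Rightarrow> ('a \<Rightarrow> 'a \<Rightarrow> bool) \<Rightarrow> bool" where
  "connected_graph V E \<longleftrightarrow> (\<forall>x\<in>V. \<forall>y\<in>V. E\<^sup>*\<^sup>* x y)"

definition signature :: "'a set \<Rightarrow> ('a \<Rightarrow> 'a \<Rightarrow> bool) \<Rightarrow> ('a \<Rightarrow> 'a \<Rightarrow> real) \<Rightarrow> bool" where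
  "signature V E \<sigma> \<longleftrightarrow> (\<forall>x y. E x y \<longrightarrow> \<sigma> x y = \<sigma> y x \<and> (\<sigma> x y = 1 \<or> \<sigma> x y = -1))"

definition nbrs :: "'a set \<Rightarrow> ('a \<Rightarrow> 'a \<Rightarrow> bool) \<Rightarrow> 'a \<Rightarrow> 'a set" where
  "nbrs V E x = {y \<in> V. E x y}"

definition deg :: "'a set \<Rightarrow> ('a \<Rightarrow> 'a \<Rightarrow> bool) \<Rightarrow> 'a \<Rightarrow> nat" where
  "deg V E x = card (nbrs V E x)"

definition max_deg :: "'a set \<Rightarrow> ('a \<Rightarrow> 'a \<Rightarrow> bool) \<Rightarrow> nat" where
  "max_deg V E = Max (deg V E ` V)"

definition gdist :: "'a set \<Rightarrow> ('a \<Rightarrow> 'a \<Rightarrow> bool) \<Rightarrow> 'a \<Rightarrow> 'a \<Rightarrow> nat" where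
  "gdist V E x y = (LEAST n. (E ^^ n) x y)"

definition diameter :: "'a set \<Rightarrow> ('a \<Rightarrow> 'a \<Rightarrow> bool) \<Rightarrow> nat" where
  "diameter V E = Max {gdist V E x y | x y. x \<in> V \<and> y \<in> V}"

definition slap :: "'a set \<Rightarrow> ('a \<Rightarrow> 'a \<Rightarrow> bool) \<Rightarrow> ('a \<Rightarrow> 'a \<Rightarrow> real) \<Rightarrow> ('a \<Rightarrow> real) \<Rightarrow> 'a \<Rightarrow> real" where
  "slap V E \<sigma> f x = (1 / real (deg V E x)) * (\<Sum>y\<in>nbrs V E x. \<sigma> x y * f y - f x)"

definition lap :: "'a set \<Rightarrow> ('a \<Rightarrow> 'a \<Rightarrow> bool) \<Rightarrow> ('a \<Rightarrow> real) \<Rightarrow> 'a \<Rightarrow> real" where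
  "lap V E f = slap V E (\<lambda>_ _. 1) f"

definition sGamma :: "'a set \<Rightarrow> ('a \<Rightarrow> 'a \<Rightarrow> bool) \<Rightarrow> ('a \<Rightarrow> 'a \<Rightarrow> real) \<Rightarrow> ('a \<Rightarrow> real) \<Rightarrow> ('a \<Rightarrow> real) \<Rightarrow> 'a \<Rightarrow> real" where
  "sGamma V E \<sigma> f g x = (1/2) * (lap V E (\<lambda>z. f z * g z) x
      - g x * slap V E \<sigma> f x - f x * slap V E \<sigma> g x)"

definition sGamma2 :: "'a set \<Rightarrow> ('a \<Rightarrow> 'a \<Rightarrow> bool) \<Rightarrow> ('a \<Rightarrow> 'a \<Rightarrow> real) \<Rightarrow> ('a \<Rightarrow> real) \<Rightarrow> ('a \<Rightarrow> real) \<Rightarrow> 'a \<Rightarrow> real" where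
  "sGamma2 V E \<sigma> f g x = (1/2) * (lap V E (sGamma V E \<sigma> f g) x
      - sGamma V E \<sigma> g (slap V E \<sigma> f) x - sGamma V E \<sigma> f (slap V E \<sigma> g) x)"

definition invN :: "ereal \<Rightarrow> real" where
  "invN N = (if N = \<infinity> then 0 else 1 / real_of_ereal N)"

definition CD :: "'a set \<Rightarrow> ('a \<Rightarrow> 'a \<Rightarrow> bool) \<Rightarrow> ('a \<Rightarrow> 'a \<Rightarrow> real) \<Rightarrow> real \<Rightarrow> ereal \<Rightarrow> bool" where
  "CD V E \<sigma> K N \<longleftrightarrow> (\<forall>f. \<forall>x\<in>V.
      sGamma2 V E \<sigma> f f x \<ge> invN N * (slap V E \<sigma> f x)\<^sup>2 + K * sGamma V E \<sigma> f f x)"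

definition eigenspace :: "'a set \<Rightarrow> ('a \<Rightarrow> 'a \<Rightarrow> bool) \<Rightarrow> ('a \<Rightarrow> 'a \<Rightarrow> real) \<Rightarrow> real \<Rightarrow> ('a \<Rightarrow> real) set" where
  "eigenspace V E \<sigma> mu = {f. (\<forall>x. x \<notin> V \<longrightarrow> f x = 0) \<and> (\<forall>x\<in>V. - slap V E \<sigma> f x = mu * f x)}"

definition is_eigenvalue :: "'a set \<Rightarrow> ('a \<Rightarrow> 'a \<Rightarrow> bool) \<Rightarrow> ('a \<Rightarrow> 'a \<Rightarrow> real) \<Rightarrow> real \<Rightarrow> bool" where
  "is_eigenvalue V E \<sigma> mu \<longleftrightarrow> (\<exists>f\<in>eigenspace V E \<sigma> mu. f \<noteq> (\<lambda>_. 0))"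

text \<open>Multiplicity (dimension of the eigenspace; Delta^sigma is self-adjoint, so
geometric = algebraic multiplicity) is at least 2.\<close>
definition mult_ge2 :: "'a set \<Rightarrow> ('a \<Rightarrow> 'a \<Rightarrow> bool) \<Rightarrow> ('a \<Rightarrow> 'a \<Rightarrow> real) \<Rightarrow> real \<Rightarrow> bool" where
  "mult_ge2 V E \<sigma> mu \<longleftrightarrow> (\<exists>f\<in>eigenspace V E \<sigma> mu. \<exists>g\<in>eigenspace V E \<sigma> mu.
      \<forall>a b::real. (\<forall>x. a * f x + b * g x = 0) \<longrightarrow> a = 0 \<and> b = 0)"

definition is_cycle :: "'a set \<Rightarrow> ('a \<Rightarrow> 'a \<Rightarrow> bool) \<Rightarrow> 'a list \<Rightarrow> bool" where
  "is_cycle V E cs \<longleftrightarrow> length cs \<ge> 3 \<and> distinct cs \<and> set cs \<subseteq> V \<and>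
     (\<forall>i < length cs. E (cs ! i) (cs ! ((i + 1) mod length cs)))"

definition balanced :: "'a set \<Rightarrow> ('a \<Rightarrow> 'a \<Rightarrow> bool) \<Rightarrow> ('a \<Rightarrow> 'a \<Rightarrow> real) \<Rightarrow> bool" where
  "balanced V E \<sigma> \<longleftrightarrow> (\<forall>cs. is_cycle V E cs \<longrightarrow>
     (\<Prod>i<length cs. \<sigma> (cs ! i) (cs ! ((i + 1) mod length cs))) = 1)"

end

theory Submission
  imports Defs
begin

(* Let f be an eigenfunction for \<lambda> and M = max f\<^sup>2. Already \<Delta>(f\<^sup>2) \<le> 0 at a maximum point of f\<^sup>2
   gives \<lambda> > 0. At a maximum point of \<Gamma>(f) + \<beta> f\<^sup>2 the Laplacian of that function is \<le> 0 too,
   and together with CD(K,N) there this acts as a maximum principle: it gives K \<le> \<lambda>(1 - 1/N) and,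
   for a suitable \<beta>, the bound \<lambda>((2+\<epsilon>)\<^sup>2 - 4/N) \<ge> 2\<epsilon>G + 2(2+\<epsilon>)K as soon as \<Gamma>(f) \<ge> M G
   somewhere.

   Such a G = 1/(2 d L \<lceil>L/2\<rceil>) comes from a walk of length L starting at a maximum point of |f|
   along which f, multiplied by the sign of the walk so far, changes sign. By Cauchy-Schwarz the
   signed differences along its edges have energy at least M/L. Once backtracks are removed, every
   odd vertex of the walk has two distinct walk neighbours, so one of these \<lceil>L/2\<rceil> vertices carries
   \<Gamma>(f) \<ge> M/(2 d L \<lceil>L/2\<rceil>).

   A sign-reversing walk of length \<le> D+1 always exists: otherwise \<sigma>\<^sub>x\<^sub>y f(x) f(y) > 0 on every
   edge, and at a minimum point of |f| this contradicts \<lambda> > 0. Balance (closed walks have sign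
   +1) brings the length down to D. So does an eigenfunction vanishing at a vertex, and such an
   eigenfunction exists when \<lambda> has multiplicity \<ge> 2. *)

lemma sum_lessThan_pairs: "(\<Sum>i<2 * (m::nat). g i) = (\<Sum>k<m. g (2 * k) + g (2 * k + 1) :: 'b::comm_monoid_add)"
  by (induction m) (simp_all add: ac_simps)

section \<open>Laplacians and eigenspaces\<close>

lemma slap_scale: "slap V E \<sigma> (\<lambda>z. c * g z) x = c * slap V E \<sigma> g x"
  by (simp add: slap_def sum_distrib_left algebra_simps)

lemma slap_add: "slap V E \<sigma> (\<lambda>z. g z + h z) x = slap V E \<sigma> g x + slap V E \<sigma> h x"
  by (simp add: slap_def sum.distrib[symmetric] add_divide_distrib[symmetric] algebra_simps)

lemma lap_scale: "lap V E (\<lambda>z. c * g z) x = c * lap V E g x"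
  unfolding lap_def by (rule slap_scale)

lemma lap_add: "lap V E (\<lambda>z. g z + h z) x = lap V E g x + lap V E h x"
  unfolding lap_def by (rule slap_add)

lemma lap_square: "lap V E (\<lambda>z. f z * f z) x = 2 * sGamma V E \<sigma> f f x + 2 * f x * slap V E \<sigma> f x"
  by (simp add: sGamma_def algebra_simps)

lemma lap_nonpos_at_max:
  assumes "\<forall>y\<in>V. F y \<le> F x"
  shows "lap V E F x \<le> 0"
  unfolding lap_def slap_def
  by (intro mult_nonneg_nonpos sum_nonpos) (use assms in \<open>auto simp: nbrs_def\<close>)

lemma eigenspace_lincomb:
  assumes "g \<in> eigenspace V E \<sigma> \<mu>" and "h \<in> eigenspace V E \<sigma> \<mu>"
  shows "(\<lambda>x. a * g x + b * h x) \<in> eigenspace V E \<sigma> \<mu>"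
proof -
  have "- slap V E \<sigma> (\<lambda>x. a * g x + b * h x) x = \<mu> * (a * g x + b * h x)" if "x \<in> V" for x
  proof -
    have "slap V E \<sigma> g x = - \<mu> * g x" and "slap V E \<sigma> h x = - \<mu> * h x"
      using assms that by (auto simp: eigenspace_def)
    then show ?thesis by (simp add: slap_add slap_scale algebra_simps)
  qed
  then show ?thesis using assms by (simp add: eigenspace_def)
qed

lemma mult_ge2_vanishing_eigenfunction:
  assumes "mult_ge2 V E \<sigma> \<mu>"
  obtains h where "h \<in> eigenspace V E \<sigma> \<mu>" and "h \<noteq> (\<lambda>_. 0)" and "h z = 0"
proof -
  obtain g h where g: "g \<in> eigenspace V E \<sigma> \<mu>" and h: "h \<in> eigenspace V E \<sigma> \<mu>"
    and indep: "\<And>a b. (\<forall>x. a * g x + b * h x = 0) \<Longrightarrow> a = 0 \<and> b = 0"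
    using assms unfolding mult_ge2_def by blast
  show ?thesis
  proof (cases "g z = 0 \<and> h z = 0")
    case True
    have "g \<noteq> (\<lambda>_. 0)" using indep[of 1 0] by auto
    with g True show ?thesis using that by blast
  next
    case False
    let ?k = "\<lambda>x. h z * g x + (- g z) * h x"
    have "?k \<in> eigenspace V E \<sigma> \<mu>" using g h by (rule eigenspace_lincomb)
    moreover have "?k \<noteq> (\<lambda>_. 0)"
      using indep[of "h z" "- g z"] False by (metis (no_types, lifting) neg_equal_0_iff_equal)
    ultimately show ?thesis using that by simp
  qed
qed

locale signed_graph =
  fixes V :: "'a set" and E :: "'a \<Rightarrow> 'a \<Rightarrow> bool" and \<sigma> :: "'a \<Rightarrow> 'a \<Rightarrow> real"
  assumes simple: "simple_graph V E" and signed: "signature V E \<sigma>"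
begin

lemma finite_V: "finite V"
  using simple by (simp add: simple_graph_def)

lemma V_nonempty: "V \<noteq> {}"
  using simple by (simp add: simple_graph_def)

lemma edge_in_V: "E x y \<Longrightarrow> x \<in> V \<and> y \<in> V"
  using simple by (simp add: simple_graph_def)

lemma edge_sym: "E x y \<Longrightarrow> E y x"
  using simple by (simp add: simple_graph_def)

lemma edge_irrefl: "\<not> E x x"
  using simple by (simp add: simple_graph_def)

lemma sign_sym: "E x y \<Longrightarrow> \<sigma> y x = \<sigma> x y"
  using signed by (metis signature_def)

lemma sign_cases: "E x y \<Longrightarrow> \<sigma> x y = 1 \<or> \<sigma> x y = -1"
  using signed by (simp add: signature_def)

lemma sign_square: "E x y \<Longrightarrow> \<sigma> x y * \<sigma> x y = 1"
  using sign_cases by fastforce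

lemma abs_sign: "E x y \<Longrightarrow> \<bar>\<sigma> x y\<bar> = 1"
  using sign_cases by fastforce

lemma finite_nbrs: "finite (nbrs V E x)"
  using finite_V by (simp add: nbrs_def)

lemma mem_nbrs_iff: "y \<in> nbrs V E x \<longleftrightarrow> E x y"
  using edge_in_V by (auto simp: nbrs_def)

lemma deg_pos: "E x y \<Longrightarrow> 0 < deg V E x"
  unfolding deg_def using finite_nbrs mem_nbrs_iff card_gt_0_iff by blast

lemma deg_le_max_deg: "x \<in> V \<Longrightarrow> deg V E x \<le> max_deg V E"
  unfolding max_deg_def using finite_V by simp

lemma exists_max_on_V: "\<exists>x0\<in>V. \<forall>x\<in>V. F x \<le> (F x0 :: real)"
  using obtains_MAX[OF finite_V V_nonempty, of F] finite_V by (metis Max_ge finite_imageI imageI)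

lemma exists_min_on_V: "\<exists>x0\<in>V. \<forall>x\<in>V. (F x0 :: real) \<le> F x"
  using obtains_MIN[OF finite_V V_nonempty, of F] finite_V by (metis Min_le finite_imageI imageI)

definition signed_diff :: "('a \<Rightarrow> real) \<Rightarrow> 'a \<Rightarrow> 'a \<Rightarrow> real" where
  "signed_diff f x y = \<sigma> x y * f y - f x"

lemma signed_diff_sq_sym: "E x y \<Longrightarrow> (signed_diff f y x)\<^sup>2 = (signed_diff f x y)\<^sup>2"
proof -
  assume "E x y"
  then have "signed_diff f y x = - \<sigma> x y * signed_diff f x y"
    using sign_square sign_sym by (simp add: signed_diff_def algebra_simps)
  then show ?thesis
    using \<open>E x y\<close> sign_square by (simp add: power2_eq_square algebra_simps)
qed

lemma sGamma_self:
  "sGamma V E \<sigma> f f x = (\<Sum>y\<in>nbrs V E x. (signed_diff f x y)\<^sup>2) / (2 * real (deg V E x))"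
proof -
  have "(f y * f y - f x * f x) - 2 * f x * (\<sigma> x y * f y - f x) = (signed_diff f x y)\<^sup>2"
    if "y \<in> nbrs V E x" for y
    using that sign_square[of x y] by (simp add: mem_nbrs_iff signed_diff_def power2_eq_square algebra_simps)
  then have "(\<Sum>y\<in>nbrs V E x. 1 * (f y * f y) - f x * f x)
      - 2 * f x * (\<Sum>y\<in>nbrs V E x. \<sigma> x y * f y - f x) = (\<Sum>y\<in>nbrs V E x. (signed_diff f x y)\<^sup>2)"
    by (simp add: sum_distrib_left sum_subtractf[symmetric])
  then show ?thesis
    unfolding sGamma_def lap_def slap_def by (simp add: add_divide_distrib[symmetric] field_simps)
qed

lemma sGamma_self_nonneg: "0 \<le> sGamma V E \<sigma> f f x"
  unfolding sGamma_self by (simp add: sum_nonneg)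

lemma sum_signed_diff_sq_le_sGamma:
  assumes "x \<in> V" and "S \<subseteq> nbrs V E x"
  shows "(\<Sum>y\<in>S. (signed_diff f x y)\<^sup>2) \<le> 2 * real (max_deg V E) * sGamma V E \<sigma> f f x"
proof -
  have "(\<Sum>y\<in>S. (signed_diff f x y)\<^sup>2) \<le> (\<Sum>y\<in>nbrs V E x. (signed_diff f x y)\<^sup>2)"
    by (intro sum_mono2 finite_nbrs assms(2)) auto
  also have "\<dots> = 2 * real (deg V E x) * sGamma V E \<sigma> f f x"
    by (cases "deg V E x = 0") (auto simp: sGamma_self deg_def finite_nbrs)
  also have "\<dots> \<le> 2 * real (max_deg V E) * sGamma V E \<sigma> f f x"
    using deg_le_max_deg[OF assms(1)] sGamma_self_nonneg by (intro mult_right_mono) auto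
  finally show ?thesis .
qed

lemma slap_eq_0_if_sGamma_self_eq_0:
  assumes "sGamma V E \<sigma> f f x = 0"
  shows "slap V E \<sigma> f x = 0"
proof (cases "deg V E x = 0")
  case False
  then have "\<forall>y\<in>nbrs V E x. (signed_diff f x y)\<^sup>2 = 0"
    using assms finite_nbrs unfolding sGamma_self by (simp add: sum_nonneg_eq_0_iff)
  then show ?thesis by (simp add: slap_def signed_diff_def)
qed (simp add: slap_def)

section \<open>Walks and their signs\<close>

definition walk :: "(nat \<Rightarrow> 'a) \<Rightarrow> nat \<Rightarrow> bool" where
  "walk p n \<longleftrightarrow> (\<forall>i<n. E (p i) (p (Suc i)))"

definition walk_sign :: "(nat \<Rightarrow> 'a) \<Rightarrow> nat \<Rightarrow> real" where
  "walk_sign p n = (\<Prod>i<n. \<sigma> (p i) (p (Suc i)))"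

definition nonbacktracking :: "(nat \<Rightarrow> 'a) \<Rightarrow> nat \<Rightarrow> bool" where
  "nonbacktracking p n \<longleftrightarrow> (\<forall>i. i + 2 \<le> n \<longrightarrow> p i \<noteq> p (i + 2))"

definition sign_reversing_walk :: "('a \<Rightarrow> real) \<Rightarrow> (nat \<Rightarrow> 'a) \<Rightarrow> nat \<Rightarrow> bool" where
  "sign_reversing_walk f p n \<longleftrightarrow> walk p n \<and> f (p 0) * walk_sign p n * f (p n) \<le> 0"

definition walk_join :: "(nat \<Rightarrow> 'a) \<Rightarrow> nat \<Rightarrow> (nat \<Rightarrow> 'a) \<Rightarrow> nat \<Rightarrow> 'a" where
  "walk_join p m q k = (if k \<le> m then p k else q (k - m))"

lemma walk_in_V:
  assumes "walk p n" and "0 < n" and "j \<le> n"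
  shows "p j \<in> V"
proof (cases "j < n")
  case True
  then show ?thesis using assms(1) edge_in_V by (auto simp: walk_def)
next
  case False
  with assms obtain i where "j = Suc i" by (cases j) auto
  with False assms have "i < n" "j = Suc i" by simp_all
  then show ?thesis using assms(1) edge_in_V by (auto simp: walk_def)
qed

lemma walk_sign_Suc: "walk_sign p (Suc n) = walk_sign p n * \<sigma> (p n) (p (Suc n))"
  by (simp add: walk_sign_def)

lemma walk_sign_cong: "(\<And>k. k \<le> n \<Longrightarrow> p k = q k) \<Longrightarrow> walk_sign p n = walk_sign q n"
  unfolding walk_sign_def by (rule prod.cong) auto

lemma abs_walk_sign: "walk p n \<Longrightarrow> \<bar>walk_sign p n\<bar> = 1"
proof (induction n)
  case (Suc n)
  then have "walk p n" and "E (p n) (p (Suc n))" by (simp_all add: walk_def)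
  with Suc.IH show ?case by (simp add: walk_sign_Suc abs_mult abs_sign)
qed (simp add: walk_sign_def)

lemma walk_shift: "walk p n \<Longrightarrow> a + b \<le> n \<Longrightarrow> walk (\<lambda>k. p (a + k)) b"
  by (simp add: walk_def)

lemma walk_sign_split: "walk_sign p (a + b) = walk_sign p a * walk_sign (\<lambda>k. p (a + k)) b"
  by (induction b) (simp_all add: walk_sign_def)

lemma walk_join:
  assumes "walk p m" and "walk q n" and "p m = q 0"
  shows "walk (walk_join p m q) (m + n)"
  unfolding walk_def
proof (intro allI impI)
  fix i assume "i < m + n"
  then consider "i < m" | "m \<le> i" "i - m < n" by linarith
  then show "E (walk_join p m q i) (walk_join p m q (Suc i))"
  proof cases
    case 1 then show ?thesis using assms(1) by (simp add: walk_join_def walk_def)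
  next
    case 2
    then have "walk_join p m q i = q (i - m)" and "walk_join p m q (Suc i) = q (Suc (i - m))"
      using assms(3) by (auto simp: walk_join_def Suc_diff_le)
    then show ?thesis using assms(2) 2 by (simp add: walk_def)
  qed
qed

lemma walk_sign_join:
  assumes "p m = q 0"
  shows "walk_sign (walk_join p m q) (m + n) = walk_sign p m * walk_sign q n"
proof -
  have "walk_sign (walk_join p m q) m = walk_sign p m"
    by (rule walk_sign_cong) (simp add: walk_join_def)
  moreover have "(\<lambda>k. walk_join p m q (m + k)) = q"
    using assms by (auto simp: walk_join_def)
  ultimately show ?thesis by (simp add: walk_sign_split)
qed

lemma walk_extend: "walk p n \<Longrightarrow> E (p n) v \<Longrightarrow> walk (p(Suc n := v)) (Suc n)"
  by (auto simp: walk_def less_Suc_eq)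

lemma walk_sign_extend: "walk_sign (p(Suc n := v)) (Suc n) = walk_sign p n * \<sigma> (p n) v"
  by (simp add: walk_sign_def)

lemma walk_rev:
  assumes "walk p n"
  shows "walk (\<lambda>k. p (n - k)) n"
  unfolding walk_def
proof (intro allI impI)
  fix i assume "i < n"
  then have "E (p (n - Suc i)) (p (Suc (n - Suc i)))" using assms by (simp add: walk_def)
  moreover have "Suc (n - Suc i) = n - i" using \<open>i < n\<close> by simp
  ultimately show "E (p (n - i)) (p (n - Suc i))" by (simp add: edge_sym)
qed

lemma walk_sign_rev: "walk p n \<Longrightarrow> walk_sign (\<lambda>k. p (n - k)) n = walk_sign p n"
proof (induction n arbitrary: p)
  case (Suc n)
  let ?q = "\<lambda>k. p (Suc k)"
  have "walk_sign (\<lambda>k. p (Suc n - k)) n = walk_sign (\<lambda>k. ?q (n - k)) n"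
    by (rule walk_sign_cong) (simp add: Suc_diff_le)
  then have "walk_sign (\<lambda>k. p (Suc n - k)) (Suc n) = walk_sign (\<lambda>k. ?q (n - k)) n * \<sigma> (p 1) (p 0)"
    by (simp add: walk_sign_Suc)
  also have "walk_sign (\<lambda>k. ?q (n - k)) n = walk_sign ?q n"
    using Suc walk_shift[of p "Suc n" 1 n] by simp
  also have "\<sigma> (p 1) (p 0) = \<sigma> (p 0) (p 1)"
    using Suc.prems sign_sym[of "p 0" "p 1"] by (simp add: walk_def)
  also have "walk_sign ?q n * \<sigma> (p 0) (p 1) = walk_sign p (1 + n)"
    unfolding walk_sign_split by (simp add: walk_sign_def)
  finally show ?case by simp
qed (simp add: walk_sign_def)

lemma walk_le_diameter:
  assumes "connected_graph V E" and "x \<in> V" and "y \<in> V"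
  obtains p n where "walk p n" "p 0 = x" "p n = y" "n \<le> diameter V E"
proof -
  obtain n0 where "(E ^^ n0) x y"
    using assms rtranclp_imp_relpowp by (metis connected_graph_def)
  then have "(E ^^ gdist V E x y) x y" unfolding gdist_def by (rule LeastI)
  moreover have "gdist V E x y \<le> diameter V E"
  proof -
    have "finite {gdist V E a b | a b. a \<in> V \<and> b \<in> V}"
      by (rule finite_subset[of _ "(\<lambda>(a, b). gdist V E a b) ` (V \<times> V)"]) (auto simp: finite_V)
    then show ?thesis unfolding diameter_def using assms(2,3) by (auto intro: Max_ge)
  qed
  moreover have "\<exists>p. walk p (gdist V E x y) \<and> p 0 = x \<and> p (gdist V E x y) = y"
    using calculation(1) by (auto simp: relpowp_fun_conv walk_def)
  ultimately show ?thesis using that by blast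
qed

lemma walk_cut:
  assumes "walk p n" and "i < j" and "j \<le> n" and "p i = p j"
  defines "r \<equiv> walk_join p i (\<lambda>k. p (j + k))"
  shows "walk r (i + (n - j))" and "r 0 = p 0" and "r (i + (n - j)) = p n"
    and "walk_sign p n = walk_sign r (i + (n - j)) * walk_sign (\<lambda>k. p (i + k)) (j - i)"
proof -
  have "walk p i" and "walk (\<lambda>k. p (j + k)) (n - j)"
    using assms walk_shift[of p n 0 i] walk_shift[of p n j "n - j"] by simp_all
  then show "walk r (i + (n - j))"
    unfolding r_def using walk_join[of p i "\<lambda>k. p (j + k)"] assms(4) by simp
  show "r 0 = p 0" by (simp add: r_def walk_join_def)
  show "r (i + (n - j)) = p n"
    using assms(2-4) by (cases "j = n") (auto simp: r_def walk_join_def)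
  have "walk_sign p n = walk_sign p (i + ((j - i) + (n - j)))"
    using assms(2,3) by simp
  also have "\<dots> = walk_sign p i * walk_sign (\<lambda>k. p (i + k)) (j - i) * walk_sign (\<lambda>k. p (j + k)) (n - j)"
    using assms(2) unfolding walk_sign_split by (simp add: add.assoc)
  moreover have "walk_sign r (i + (n - j)) = walk_sign p i * walk_sign (\<lambda>k. p (j + k)) (n - j)"
    using assms(4) unfolding r_def by (simp add: walk_sign_join)
  ultimately show "walk_sign p n = walk_sign r (i + (n - j)) * walk_sign (\<lambda>k. p (i + k)) (j - i)"
    by (simp add: ac_simps)
qed

lemma exists_nonbacktracking_walk:
  assumes "walk p n"
  shows "\<exists>q m. walk q m \<and> nonbacktracking q m \<and> m \<le> n \<and> q 0 = p 0 \<and> q m = p n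
    \<and> walk_sign q m = walk_sign p n"
  using assms
proof (induction n arbitrary: p rule: less_induct)
  case (less n)
  show ?case
  proof (cases "nonbacktracking p n")
    case True
    with less.prems show ?thesis by blast
  next
    case False
    then obtain i where i: "i + 2 \<le> n" "p i = p (i + 2)"
      by (auto simp: nonbacktracking_def)
    define r where "r = walk_join p i (\<lambda>k. p (i + 2 + k))"
    have r: "walk r (n - 2)" "r 0 = p 0" "r (n - 2) = p n"
      "walk_sign p n = walk_sign r (n - 2) * walk_sign (\<lambda>k. p (i + k)) 2"
      using walk_cut[OF less.prems, of i "i + 2"] i by (simp_all add: r_def)
    have e: "E (p i) (p (Suc i))" using less.prems i(1) by (simp add: walk_def)
    have "p (Suc (Suc i)) = p i" using i(2) by simp
    then have "walk_sign (\<lambda>k. p (i + k)) 2 = \<sigma> (p i) (p (Suc i)) * \<sigma> (p (Suc i)) (p i)"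
      by (simp add: walk_sign_def numeral_2_eq_2)
    also have "\<dots> = 1" using sign_sym[OF e] sign_square[OF e] by simp
    finally have "walk_sign r (n - 2) = walk_sign p n" using r(4) by simp
    moreover have "n - 2 < n" using i(1) by simp
    ultimately show ?thesis
      using less.IH[of "n - 2" r] r(1-3) by fastforce
  qed
qed

lemma is_cycle_closed_walk:
  assumes "walk p n" and "p n = p 0" and "3 \<le> n" and "inj_on p {..<n}"
  shows "is_cycle V E (map p [0..<n])"
    and "(\<Prod>i<n. \<sigma> (map p [0..<n] ! i) (map p [0..<n] ! ((i + 1) mod n))) = walk_sign p n"
proof -
  have succ: "map p [0..<n] ! ((i + 1) mod n) = p (Suc i)" if "i < n" for i
    using that assms(2,3) by (cases "Suc i = n") auto
  have "set (map p [0..<n]) \<subseteq> V"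
    using walk_in_V[OF assms(1)] assms(3) by auto
  then show "is_cycle V E (map p [0..<n])"
    unfolding is_cycle_def using assms(1,3,4) succ
    by (auto simp: distinct_map atLeast0LessThan walk_def)
  show "(\<Prod>i<n. \<sigma> (map p [0..<n] ! i) (map p [0..<n] ! ((i + 1) mod n))) = walk_sign p n"
    unfolding walk_sign_def using succ by (intro prod.cong) auto
qed

lemma balanced_closed_walk_sign:
  assumes "balanced V E \<sigma>" and "walk p n" and "p n = p 0"
  shows "walk_sign p n = 1"
  using assms(2,3)
proof (induction n arbitrary: p rule: less_induct)
  case (less n)
  show ?case
  proof (cases "inj_on p {..<n}")
    case False
    then obtain i j where ij: "i < j" "j < n" "p i = p j"
      unfolding inj_on_def by (metis lessThan_iff linorder_neqE_nat)
    define r where "r = walk_join p i (\<lambda>k. p (j + k))"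
    have r: "walk r (i + (n - j))" "r 0 = p 0" "r (i + (n - j)) = p n"
      "walk_sign p n = walk_sign r (i + (n - j)) * walk_sign (\<lambda>k. p (i + k)) (j - i)"
      using walk_cut[OF less.prems(1) ij(1)] ij(2,3) unfolding r_def by simp_all
    have "walk_sign r (i + (n - j)) = 1"
      using less.IH[of "i + (n - j)" r] r(1-3) less.prems(2) ij by simp
    moreover have "walk_sign (\<lambda>k. p (i + k)) (j - i) = 1"
      using less.IH[of "j - i" "\<lambda>k. p (i + k)"] walk_shift[OF less.prems(1), of i "j - i"] ij
      by simp
    ultimately show ?thesis using r(4) by simp
  next
    case True
    consider "n = 0" | "n = 1" | "n = 2" | "3 \<le> n" by linarith
    then show ?thesis
    proof cases
      case 1 then show ?thesis by (simp add: walk_sign_def)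
    next
      case 2 then show ?thesis using less.prems edge_irrefl by (simp add: walk_def)
    next
      case 3
      then have "E (p 0) (p 1)" and "p 2 = p 0" using less.prems by (simp_all add: walk_def)
      then show ?thesis
        using 3 sign_sym sign_square by (simp add: walk_sign_def numeral_2_eq_2 lessThan_Suc)
    next
      case 4
      note cycle = is_cycle_closed_walk[OF less.prems 4 True]
      have "(\<Prod>i<length (map p [0..<n]).
          \<sigma> (map p [0..<n] ! i) (map p [0..<n] ! ((i + 1) mod length (map p [0..<n])))) = 1"
        using assms(1) cycle(1) unfolding balanced_def by blast
      then show ?thesis using cycle(2) by simp
    qed
  qed
qed

lemma sq_le_energy_of_sign_reversing_walk:
  assumes "sign_reversing_walk f p n"
  shows "(f (p 0))\<^sup>2 \<le> real n * (\<Sum>k<n. (signed_diff f (p k) (p (Suc k)))\<^sup>2)"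
proof -
  define h where "h k = walk_sign p k * f (p k)" for k
  have "\<bar>h k - h (Suc k)\<bar> = \<bar>signed_diff f (p k) (p (Suc k))\<bar>" if "k < n" for k
  proof -
    have "h k - h (Suc k) = - walk_sign p k * signed_diff f (p k) (p (Suc k))"
      by (simp add: h_def signed_diff_def walk_sign_Suc algebra_simps)
    moreover have "walk p k" using assms that by (simp add: sign_reversing_walk_def walk_def)
    ultimately show ?thesis by (simp add: abs_mult abs_walk_sign)
  qed
  then have "\<bar>h 0 - h n\<bar> \<le> (\<Sum>k<n. \<bar>signed_diff f (p k) (p (Suc k))\<bar>)"
    unfolding sum_lessThan_telescope'[symmetric] by (metis (no_types, lifting) lessThan_iff sum_abs sum.cong)
  moreover have "\<bar>f (p 0)\<bar> \<le> \<bar>h 0 - h n\<bar>"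
  proof -
    have "h 0 = f (p 0)" by (simp add: h_def walk_sign_def)
    moreover have "f (p 0) * h n \<le> 0"
      using assms by (simp add: sign_reversing_walk_def h_def mult.assoc)
    ultimately show ?thesis by (smt (verit) mult_pos_pos mult_neg_neg)
  qed
  ultimately have "\<bar>f (p 0)\<bar> \<le> (\<Sum>k<n. \<bar>signed_diff f (p k) (p (Suc k))\<bar>)" by linarith
  then have "(f (p 0))\<^sup>2 \<le> (\<Sum>k<n. \<bar>signed_diff f (p k) (p (Suc k))\<bar>)\<^sup>2"
    by (metis abs_ge_zero power2_abs power_mono)
  also have "\<dots> \<le> real n * (\<Sum>k<n. (signed_diff f (p k) (p (Suc k)))\<^sup>2)"
    using sum_squared_le_sum_of_squares[of "\<lambda>k. \<bar>signed_diff f (p k) (p (Suc k))\<bar>" "{..<n}"]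
    by (simp add: mult.commute)
  finally show ?thesis .
qed

lemma walk_energy_le_sGamma:
  assumes "walk p n" and "nonbacktracking p n"
  shows "(\<Sum>k<n. (signed_diff f (p k) (p (Suc k)))\<^sup>2)
    \<le> 2 * real (max_deg V E) * (\<Sum>i<(n + 1) div 2. sGamma V E \<sigma> f f (p (2 * i + 1)))"
proof -
  define b where "b k = (if k < n then (signed_diff f (p k) (p (Suc k)))\<^sup>2 else 0)" for k
  (* p (2i+1) absorbs both of its walk edges, whose other ends differ as p does not backtrack *)
  have pair: "b (2 * i) + b (2 * i + 1) \<le> 2 * real (max_deg V E) * sGamma V E \<sigma> f f (p (2 * i + 1))"
    if "i < (n + 1) div 2" for i
  proof -
    define j where "j = 2 * i + 1"
    have "j \<le> n" using that by (simp add: j_def)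
    then have "p j \<in> V" using walk_in_V[OF assms(1)] by (simp add: j_def)
    have edge_back: "E (p j) (p (2 * i))"
      using assms(1) \<open>j \<le> n\<close> by (simp add: walk_def j_def edge_sym)
    have b_back: "b (2 * i) = (signed_diff f (p j) (p (2 * i)))\<^sup>2"
      using \<open>j \<le> n\<close> signed_diff_sq_sym[OF edge_back] by (simp add: b_def j_def)
    show ?thesis
    proof (cases "j < n")
      case True
      have edge_fwd: "E (p j) (p (Suc j))" using assms(1) True by (simp add: walk_def)
      have "p (2 * i) \<noteq> p (Suc j)" using assms(2) True by (simp add: nonbacktracking_def j_def)
      then have "b (2 * i) + b (2 * i + 1) = (\<Sum>y\<in>{p (2 * i), p (Suc j)}. (signed_diff f (p j) y)\<^sup>2)"
        using b_back True by (simp add: b_def j_def)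
      also have "\<dots> \<le> 2 * real (max_deg V E) * sGamma V E \<sigma> f f (p j)"
        using edge_back edge_fwd \<open>p j \<in> V\<close> by (intro sum_signed_diff_sq_le_sGamma) (auto simp: mem_nbrs_iff)
      finally show ?thesis by (simp add: j_def)
    next
      case False
      have "b (2 * i) + b (2 * i + 1) = (\<Sum>y\<in>{p (2 * i)}. (signed_diff f (p j) y)\<^sup>2)"
        using b_back False by (simp add: b_def j_def)
      also have "\<dots> \<le> 2 * real (max_deg V E) * sGamma V E \<sigma> f f (p j)"
        using edge_back \<open>p j \<in> V\<close> by (intro sum_signed_diff_sq_le_sGamma) (auto simp: mem_nbrs_iff)
      finally show ?thesis by (simp add: j_def)
    qed
  qed
  have "(\<Sum>k<n. (signed_diff f (p k) (p (Suc k)))\<^sup>2) = (\<Sum>k<2 * ((n + 1) div 2). b k)"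
    by (rule sum.mono_neutral_cong_left) (auto simp: b_def)
  also have "\<dots> = (\<Sum>i<(n + 1) div 2. b (2 * i) + b (2 * i + 1))"
    by (rule sum_lessThan_pairs)
  also have "\<dots> \<le> (\<Sum>i<(n + 1) div 2. 2 * real (max_deg V E) * sGamma V E \<sigma> f f (p (2 * i + 1)))"
    using pair by (intro sum_mono) auto
  finally show ?thesis by (simp add: sum_distrib_left)
qed

lemma sq_le_sGamma_along_nonbacktracking_walk:
  assumes "sign_reversing_walk f p n" and "nonbacktracking p n" and "0 < n"
  shows "\<exists>y\<in>V. (f (p 0))\<^sup>2 \<le> 2 * (real (max_deg V E) * real n * real ((n + 1) div 2)) * sGamma V E \<sigma> f f y"
proof -
  define c where "c = (n + 1) div 2"
  have "0 < c" using assms(3) by (simp add: c_def)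
  then obtain i where "i < c"
    and i_Max: "Max ((\<lambda>k. sGamma V E \<sigma> f f (p (2 * k + 1))) ` {..<c}) = sGamma V E \<sigma> f f (p (2 * i + 1))"
    using obtains_MAX[of "{..<c}" "\<lambda>k. sGamma V E \<sigma> f f (p (2 * k + 1))"] by auto
  have i_max: "sGamma V E \<sigma> f f (p (2 * k + 1)) \<le> sGamma V E \<sigma> f f (p (2 * i + 1))" if "k < c" for k
    unfolding i_Max[symmetric] using that by (intro Max_ge) auto
  have "walk p n" using assms(1) by (simp add: sign_reversing_walk_def)
  have "(f (p 0))\<^sup>2 \<le> real n * (\<Sum>k<n. (signed_diff f (p k) (p (Suc k)))\<^sup>2)"
    using sq_le_energy_of_sign_reversing_walk[OF assms(1)] .
  also have "\<dots> \<le> real n * (2 * real (max_deg V E) * (\<Sum>k<c. sGamma V E \<sigma> f f (p (2 * k + 1))))"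
    using walk_energy_le_sGamma[OF \<open>walk p n\<close> assms(2)] by (simp add: c_def mult_left_mono)
  also have "\<dots> \<le> real n * (2 * real (max_deg V E) * (real c * sGamma V E \<sigma> f f (p (2 * i + 1))))"
    using sum_bounded_above[of "{..<c}" "\<lambda>k. sGamma V E \<sigma> f f (p (2 * k + 1))"] i_max
    by (intro mult_left_mono) auto
  finally have "(f (p 0))\<^sup>2 \<le> 2 * (real (max_deg V E) * real n * real c) * sGamma V E \<sigma> f f (p (2 * i + 1))"
    by (simp add: ac_simps)
  moreover have "p (2 * i + 1) \<in> V"
    using walk_in_V[OF \<open>walk p n\<close> assms(3), of "2 * i + 1"] \<open>i < c\<close> by (simp add: c_def)
  ultimately show ?thesis unfolding c_def by blast
qed

lemma sign_reversing_walk_to_zero: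
  assumes "connected_graph V E" and "x \<in> V" and "z \<in> V" and "f z = 0"
  shows "\<exists>p n. p 0 = x \<and> n \<le> diameter V E \<and> sign_reversing_walk f p n"
  using walk_le_diameter[OF assms(1-3)] assms(4) by (metis sign_reversing_walk_def mult_zero_right order_refl)

end

section \<open>Eigenfunctions under CD(K, N)\<close>

definition gap_bound :: "real \<Rightarrow> ereal \<Rightarrow> real \<Rightarrow> nat \<Rightarrow> nat \<Rightarrow> real" where
  "gap_bound \<epsilon> N K d L = \<epsilon> / ((2 + \<epsilon>)\<^sup>2 - 4 * invN N) *
      (1 / (real d * real L * real_of_int \<lceil>real L / 2\<rceil>))
    + 2 * (2 + \<epsilon>) / ((2 + \<epsilon>)\<^sup>2 - 4 * invN N) * K"

lemma invN_nonneg: "N > 0 \<Longrightarrow> invN N \<ge> 0"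
  by (cases N) (auto simp: invN_def)

lemma four_invN_less:
  assumes "\<epsilon> > 0" and "N > ereal (4 / (2 + \<epsilon>)\<^sup>2)"
  shows "4 * invN N < (2 + \<epsilon>)\<^sup>2"
proof (cases N)
  case (real r)
  have sq_pos: "0 < (2 + \<epsilon>)\<^sup>2" using assms(1) by simp
  moreover have r: "4 / (2 + \<epsilon>)\<^sup>2 < r" using assms(2) real by simp
  ultimately have "0 < r" by (smt (verit) divide_pos_pos)
  moreover have "4 < r * (2 + \<epsilon>)\<^sup>2" using r sq_pos by (simp add: pos_divide_less_eq)
  ultimately show ?thesis
    using real by (simp add: invN_def divide_less_eq mult.commute)
next
  case PInf then show ?thesis using assms(1) by (simp add: invN_def)
next
  case MInf then show ?thesis using assms(2) by simp
qed

lemma ceiling_half: "\<lceil>real n / 2\<rceil> = int ((n + 1) div 2)"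
  by (cases "even n") (auto elim!: evenE oddE simp: ceiling_eq_iff)

locale signed_eigenfunction = signed_graph +
  fixes f :: "'a \<Rightarrow> real" and lam :: real
  assumes eigenfunction: "f \<in> eigenspace V E \<sigma> lam"
begin

abbreviation \<Gamma> :: "'a \<Rightarrow> real" where
  "\<Gamma> \<equiv> sGamma V E \<sigma> f f"

lemma eigenfunction_outside: "x \<notin> V \<Longrightarrow> f x = 0"
  using eigenfunction by (simp add: eigenspace_def)

lemma slap_eigenfunction: "slap V E \<sigma> f x = - lam * f x"
proof (cases "x \<in> V")
  case True
  then have "- slap V E \<sigma> f x = lam * f x" using eigenfunction by (simp add: eigenspace_def)
  then show ?thesis by simp
next
  case False
  then have "nbrs V E x = {}" using edge_in_V by (auto simp: nbrs_def)
  then show ?thesis using False by (simp add: slap_def eigenfunction_outside)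
qed

lemma lap_eigenfunction_square: "lap V E (\<lambda>z. f z * f z) x = 2 * \<Gamma> x - 2 * lam * (f x)\<^sup>2"
  using lap_square[of V E f x \<sigma>] by (simp add: slap_eigenfunction power2_eq_square)

lemma sGamma2_eigenfunction: "sGamma2 V E \<sigma> f f x = lap V E \<Gamma> x / 2 + lam * \<Gamma> x"
proof -
  have slap_f: "slap V E \<sigma> f = (\<lambda>z. - lam * f z)"
    using slap_eigenfunction by blast
  have "lap V E (\<lambda>z. f z * (- lam * f z)) x = - lam * lap V E (\<lambda>z. f z * f z) x"
    using lap_scale[of V E "- lam" "\<lambda>z. f z * f z"] by (simp add: algebra_simps)
  moreover have "slap V E \<sigma> (\<lambda>z. - lam * f z) x = - lam * slap V E \<sigma> f x"
    by (rule slap_scale)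
  ultimately have "sGamma V E \<sigma> f (slap V E \<sigma> f) x = - lam * \<Gamma> x"
    unfolding sGamma_def slap_f by (simp add: algebra_simps)
  then show ?thesis by (simp add: sGamma2_def)
qed

lemma CD_max_principle:
  assumes "CD V E \<sigma> K N" and "x0 \<in> V"
    and max: "\<forall>x\<in>V. \<Gamma> x + \<beta> * (f x)\<^sup>2 \<le> \<Gamma> x0 + \<beta> * (f x0)\<^sup>2"
  shows "lam * (invN N * lam - \<beta>) * (f x0)\<^sup>2 \<le> (lam - K - \<beta>) * \<Gamma> x0"
proof -
  have "lap V E (\<lambda>x. \<Gamma> x + \<beta> * (f x * f x)) x0 \<le> 0"
    using max by (intro lap_nonpos_at_max) (simp add: power2_eq_square)
  then have lap_max: "lap V E \<Gamma> x0 + \<beta> * (2 * \<Gamma> x0 - 2 * lam * (f x0)\<^sup>2) \<le> 0"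
    by (simp add: lap_add lap_scale lap_eigenfunction_square power2_eq_square)
  have "invN N * (slap V E \<sigma> f x0)\<^sup>2 + K * \<Gamma> x0 \<le> sGamma2 V E \<sigma> f f x0"
    using assms(1,2) by (simp add: CD_def)
  then have "invN N * lam\<^sup>2 * (f x0)\<^sup>2 + K * \<Gamma> x0 \<le> lap V E \<Gamma> x0 / 2 + lam * \<Gamma> x0"
    by (simp add: sGamma2_eigenfunction slap_eigenfunction power_mult_distrib)
  with lap_max show ?thesis
    by (simp add: power2_eq_square algebra_simps)
qed

end

locale nontrivial_eigenfunction = signed_eigenfunction +
  assumes nonzero: "f \<noteq> (\<lambda>_. 0)" and eigenvalue_nonzero: "lam \<noteq> 0"
begin

definition max_sq :: real where
  "max_sq = Max ((\<lambda>x. (f x)\<^sup>2) ` V)"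

lemma max_sq_attained: "\<exists>x\<in>V. (f x)\<^sup>2 = max_sq"
  unfolding max_sq_def using obtains_MAX[OF finite_V V_nonempty] by metis

lemma sq_le_max_sq: "(f x)\<^sup>2 \<le> max_sq"
proof (cases "x \<in> V")
  case True
  then show ?thesis unfolding max_sq_def using finite_V by simp
next
  case False
  obtain y where "(f y)\<^sup>2 = max_sq" using max_sq_attained by blast
  then show ?thesis using eigenfunction_outside[OF False] by (metis zero_le_power2 zero_power2)
qed

lemma max_sq_pos: "0 < max_sq"
proof -
  obtain x where "f x \<noteq> 0" using nonzero by auto
  then show ?thesis using sq_le_max_sq[of x] by (smt (verit) zero_less_power2)
qed

lemma sGamma_pos: "f x \<noteq> 0 \<Longrightarrow> 0 < \<Gamma> x"
  using slap_eq_0_if_sGamma_self_eq_0[of f x] sGamma_self_nonneg[of f x]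
    slap_eigenfunction[of x] eigenvalue_nonzero by force

lemma eigenvalue_pos: "0 < lam"
proof -
  obtain x where x: "x \<in> V" "(f x)\<^sup>2 = max_sq" using max_sq_attained by blast
  then have "lap V E (\<lambda>z. f z * f z) x \<le> 0"
    using sq_le_max_sq by (intro lap_nonpos_at_max) (simp add: power2_eq_square)
  then have "\<Gamma> x \<le> lam * max_sq"
    using x(2) by (simp add: lap_eigenfunction_square)
  moreover have "0 < \<Gamma> x" using x(2) max_sq_pos sGamma_pos by force
  ultimately have "0 < lam * max_sq" by linarith
  then show ?thesis using max_sq_pos by (simp add: zero_less_mult_iff)
qed

lemma curvature_le_eigenvalue:
  assumes "CD V E \<sigma> K N" and "N > 0"
  shows "K \<le> lam * (1 - invN N)"
proof (rule ccontr)
  assume "\<not> ?thesis"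
  define \<beta> where "\<beta> = invN N * lam"
  obtain x0 where x0: "x0 \<in> V" and max: "\<forall>x\<in>V. \<Gamma> x + \<beta> * (f x)\<^sup>2 \<le> \<Gamma> x0 + \<beta> * (f x0)\<^sup>2"
    using exists_max_on_V[of "\<lambda>x. \<Gamma> x + \<beta> * (f x)\<^sup>2"] by blast
  have "0 \<le> (lam * (1 - invN N) - K) * \<Gamma> x0"
    using CD_max_principle[OF assms(1) x0 max] by (simp add: \<beta>_def algebra_simps)
  with \<open>\<not> ?thesis\<close> have "\<Gamma> x0 = 0"
    using sGamma_self_nonneg[of f x0] by (smt (verit) mult_neg_pos)
  obtain x where x: "x \<in> V" "(f x)\<^sup>2 = max_sq" using max_sq_attained by blast
  have "0 \<le> \<beta>" using invN_nonneg[OF assms(2)] eigenvalue_pos by (simp add: \<beta>_def)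
  then have "\<beta> * (f x0)\<^sup>2 \<le> \<beta> * (f x)\<^sup>2" using x(2) sq_le_max_sq by (simp add: mult_left_mono)
  then have "\<Gamma> x \<le> 0" using max x(1) \<open>\<Gamma> x0 = 0\<close> by fastforce
  moreover have "f x \<noteq> 0" using x(2) max_sq_pos by auto
  ultimately show False using sGamma_pos by fastforce
qed

lemma eigenvalue_bound_from_gradient:
  assumes "CD V E \<sigma> K N" and "N > 0" and "\<epsilon> > 0"
    and "x \<in> V" and "max_sq * G \<le> \<Gamma> x"
  shows "2 * \<epsilon> * G + 2 * (2 + \<epsilon>) * K \<le> lam * ((2 + \<epsilon>)\<^sup>2 - 4 * invN N)"
proof -
  define s where "s = lam * (1 - invN N) - K"
  define t where "t = \<epsilon> * lam / 2"
  (* chosen so that the coefficient lam - K - \<beta> of \<Gamma> x0 in the maximum principle is -t *)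
  define \<beta> where "\<beta> = invN N * lam + s + t"
  have "0 \<le> s" using curvature_le_eigenvalue[OF assms(1,2)] by (simp add: s_def)
  moreover have "0 < t" using assms(3) eigenvalue_pos by (simp add: t_def)
  ultimately have "0 \<le> \<beta>" using invN_nonneg[OF assms(2)] eigenvalue_pos by (simp add: \<beta>_def)
  obtain x0 where x0: "x0 \<in> V" and max: "\<forall>x\<in>V. \<Gamma> x + \<beta> * (f x)\<^sup>2 \<le> \<Gamma> x0 + \<beta> * (f x0)\<^sup>2"
    using exists_max_on_V[of "\<lambda>x. \<Gamma> x + \<beta> * (f x)\<^sup>2"] by blast
  have "t * \<Gamma> x0 \<le> lam * (s + t) * (f x0)\<^sup>2"
    using CD_max_principle[OF assms(1) x0 max] by (simp add: \<beta>_def s_def algebra_simps)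
  also have "\<dots> \<le> lam * (s + t) * max_sq"
    using \<open>0 \<le> s\<close> \<open>0 < t\<close> eigenvalue_pos sq_le_max_sq by (intro mult_left_mono) auto
  finally have gradient_x0: "t * \<Gamma> x0 \<le> lam * (s + t) * max_sq" .
  have "max_sq * G \<le> \<Gamma> x + \<beta> * (f x)\<^sup>2"
    using assms(5) \<open>0 \<le> \<beta>\<close> by (simp add: add_increasing2)
  also have "\<dots> \<le> \<Gamma> x0 + \<beta> * (f x0)\<^sup>2"
    using max assms(4) by blast
  also have "\<dots> \<le> \<Gamma> x0 + \<beta> * max_sq"
    using \<open>0 \<le> \<beta>\<close> sq_le_max_sq by (simp add: mult_left_mono)
  finally have "t * (max_sq * G) \<le> t * (\<Gamma> x0 + \<beta> * max_sq)"
    using \<open>0 < t\<close> by simp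
  then have "max_sq * (t * G) \<le> max_sq * (lam * (s + t) + t * \<beta>)"
    using gradient_x0 by (simp add: algebra_simps)
  then have "t * G \<le> lam * (s + t) + t * \<beta>"
    using max_sq_pos by simp
  then have "lam * (2 * \<epsilon> * G) \<le> lam * (lam * ((2 + \<epsilon>)\<^sup>2 - 4 * invN N) - 2 * (2 + \<epsilon>) * K)"
    by (simp add: t_def \<beta>_def s_def power2_eq_square algebra_simps)
  then show ?thesis using eigenvalue_pos by simp
qed

lemma sGamma_lower_bound_from_walk:
  assumes "sign_reversing_walk f p n" and "(f (p 0))\<^sup>2 = max_sq" and "n \<le> L"
  shows "\<exists>y\<in>V. max_sq * (1 / (2 * (real (max_deg V E) * real L * real_of_int \<lceil>real L / 2\<rceil>))) \<le> \<Gamma> y"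
proof -
  obtain q m where q: "walk q m" "nonbacktracking q m" "m \<le> n" "q 0 = p 0" "q m = p n"
    "walk_sign q m = walk_sign p n"
    using exists_nonbacktracking_walk assms(1) unfolding sign_reversing_walk_def by blast
  then have reversing: "sign_reversing_walk f q m"
    using assms(1) by (simp add: sign_reversing_walk_def)
  have "0 < m"
  proof (rule ccontr)
    assume "\<not> 0 < m"
    then have "(f (p 0))\<^sup>2 \<le> 0"
      using reversing q(4) by (simp add: sign_reversing_walk_def walk_sign_def power2_eq_square)
    then show False using assms(2) max_sq_pos by simp
  qed
  have "E (q 0) (q 1)" using q(1) \<open>0 < m\<close> by (simp add: walk_def)
  then have "0 < max_deg V E"
    using deg_pos deg_le_max_deg edge_in_V by (metis less_le_trans)
  obtain y where "y \<in> V"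
    and "max_sq \<le> 2 * (real (max_deg V E) * real m * real ((m + 1) div 2)) * \<Gamma> y"
    using sq_le_sGamma_along_nonbacktracking_walk[OF reversing q(2) \<open>0 < m\<close>] assms(2) q(4) by auto
  moreover have "0 < 2 * (real (max_deg V E) * real m * real ((m + 1) div 2))"
    using \<open>0 < max_deg V E\<close> \<open>0 < m\<close> by simp
  ultimately have "max_sq / (2 * (real (max_deg V E) * real m * real ((m + 1) div 2))) \<le> \<Gamma> y"
    by (simp add: pos_divide_le_eq mult.commute)
  moreover have "max_sq / (2 * (real (max_deg V E) * real L * real_of_int \<lceil>real L / 2\<rceil>))
      \<le> max_sq / (2 * (real (max_deg V E) * real m * real ((m + 1) div 2)))"
    using \<open>m \<le> n\<close> assms(3) \<open>0 < max_deg V E\<close> \<open>0 < m\<close> max_sq_pos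
    by (intro divide_left_mono mult_left_mono mult_mono mult_pos_pos)
      (auto simp: ceiling_half div_le_mono)
  ultimately show ?thesis using \<open>y \<in> V\<close> by (auto intro: order_trans)
qed

lemma gap_bound_le_eigenvalue:
  assumes "CD V E \<sigma> K N" and "N > 0" and "\<epsilon> > 0" and "4 * invN N < (2 + \<epsilon>)\<^sup>2"
    and walks: "\<forall>x\<in>V. \<exists>p n. p 0 = x \<and> n \<le> L \<and> sign_reversing_walk f p n"
  shows "gap_bound \<epsilon> N K (max_deg V E) L \<le> lam"
proof -
  define X where "X = real (max_deg V E) * real L * real_of_int \<lceil>real L / 2\<rceil>"
  define Q where "Q = (2 + \<epsilon>)\<^sup>2 - 4 * invN N"
  obtain x where x: "x \<in> V" "(f x)\<^sup>2 = max_sq" using max_sq_attained by blast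
  then obtain p n where "p 0 = x" "n \<le> L" "sign_reversing_walk f p n" using walks x(1) by blast
  then obtain y where "y \<in> V" "max_sq * (1 / (2 * X)) \<le> \<Gamma> y"
    using sGamma_lower_bound_from_walk x(2) unfolding X_def by blast
  then have "2 * \<epsilon> * (1 / (2 * X)) + 2 * (2 + \<epsilon>) * K \<le> lam * Q"
    using eigenvalue_bound_from_gradient[OF assms(1-3)] unfolding Q_def by blast
  moreover have "0 < Q" using assms(4) by (simp add: Q_def)
  ultimately show ?thesis
    unfolding gap_bound_def X_def[symmetric] Q_def[symmetric] by (simp add: field_simps)
qed

section \<open>Sign-reversing walks\<close>

lemma sign_change_on_edge:
  assumes "\<forall>x\<in>V. f x \<noteq> 0"
  shows "\<exists>u v. E u v \<and> \<sigma> u v * f u * f v \<le> 0"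
proof (rule ccontr)
  assume "\<not> ?thesis"
  then have pos: "0 < \<sigma> u v * f u * f v" if "E u v" for u v
    using that by force
  obtain m where "m \<in> V" and min: "\<forall>x\<in>V. \<bar>f m\<bar> \<le> \<bar>f x\<bar>"
    using exists_min_on_V[of "\<lambda>x. \<bar>f x\<bar>"] by blast
  have "0 \<le> f m * (\<sigma> m y * f y - f m)" if "y \<in> nbrs V E m" for y
  proof -
    have "E m y" using that by (simp add: mem_nbrs_iff)
    then have "0 < f m * (\<sigma> m y * f y)" using pos[of m y] by (simp add: mult_ac)
    then have "f m * (\<sigma> m y * f y) = \<bar>f m * (\<sigma> m y * f y)\<bar>" by simp
    also have "\<dots> = \<bar>f m\<bar> * \<bar>f y\<bar>" using abs_sign[OF \<open>E m y\<close>] by (simp add: abs_mult)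
    finally have "f m * (\<sigma> m y * f y) = \<bar>f m\<bar> * \<bar>f y\<bar>" .
    moreover have "\<bar>f m\<bar> * \<bar>f m\<bar> \<le> \<bar>f m\<bar> * \<bar>f y\<bar>"
      using min edge_in_V[OF \<open>E m y\<close>] by (intro mult_left_mono) auto
    ultimately show ?thesis by (simp add: right_diff_distrib abs_mult_self_eq)
  qed
  then have "0 \<le> f m * slap V E \<sigma> f m"
    unfolding slap_def by (simp add: sum_distrib_left sum_nonneg)
  moreover have "f m * slap V E \<sigma> f m < 0"
  proof -
    have "f m \<noteq> 0" using assms \<open>m \<in> V\<close> by blast
    then have "0 < f m * f m" using not_real_square_gt_zero by blast
    then show ?thesis using eigenvalue_pos by (simp add: slap_eigenfunction mult_pos_pos mult.left_commute)
  qed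
  ultimately show False by linarith
qed

lemma sign_change_edge_if_no_sign_reversing_walk:
  assumes "connected_graph V E" and "x \<in> V" and "diameter V E \<le> L"
    and none: "\<not> (\<exists>p n. p 0 = x \<and> n \<le> L \<and> sign_reversing_walk f p n)"
  obtains u v where "E u v" and "\<sigma> u v * f u * f v \<le> 0"
proof -
  have "f y \<noteq> 0" if y: "y \<in> V" for y
  proof -
    obtain p n where "walk p n" "p 0 = x" "p n = y" "n \<le> diameter V E"
      using walk_le_diameter[OF assms(1,2) y] by blast
    show ?thesis
    proof
      assume "f y = 0"
      then have "sign_reversing_walk f p n" using \<open>walk p n\<close> \<open>p n = y\<close>
        by (simp add: sign_reversing_walk_def)
      then show False using none \<open>p 0 = x\<close> \<open>n \<le> diameter V E\<close> assms(3) by auto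
    qed
  qed
  then show ?thesis using sign_change_on_edge that by blast
qed

lemma sign_reversing_walk_le_Suc_diameter:
  assumes "connected_graph V E" and "x \<in> V"
  shows "\<exists>p n. p 0 = x \<and> n \<le> diameter V E + 1 \<and> sign_reversing_walk f p n"
proof (rule ccontr)
  assume none: "\<not> ?thesis"
  then have pos: "0 < f x * walk_sign p n * f (p n)"
    if "walk p n" "p 0 = x" "n \<le> diameter V E + 1" for p n
    using that by (force simp: sign_reversing_walk_def)
  obtain u v where uv: "E u v" "\<sigma> u v * f u * f v \<le> 0"
    using sign_change_edge_if_no_sign_reversing_walk[OF assms _ none] by auto
  obtain p m where p: "walk p m" "p 0 = x" "p m = u" "m \<le> diameter V E"
    using walk_le_diameter[OF assms] edge_in_V[OF uv(1)] by blast
  have "0 < f x * walk_sign p m * f u"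
    using pos[OF p(1,2)] p(3,4) by simp
  moreover have "0 < f x * (walk_sign p m * \<sigma> u v) * f v"
    using pos[OF walk_extend[OF p(1)], of v] p uv(1) by (simp add: walk_sign_extend)
  ultimately have "0 < (f x * walk_sign p m)\<^sup>2 * (\<sigma> u v * f u * f v)"
    using mult_pos_pos by (fastforce simp: power2_eq_square mult_ac)
  with uv(2) show False by (smt (verit) mult_nonneg_nonpos zero_le_power2)
qed

lemma sign_reversing_walk_le_diameter_if_balanced:
  assumes "connected_graph V E" and "x \<in> V" and "balanced V E \<sigma>"
  shows "\<exists>p n. p 0 = x \<and> n \<le> diameter V E \<and> sign_reversing_walk f p n"
proof (rule ccontr)
  assume none: "\<not> ?thesis"
  then have pos: "0 < f x * walk_sign p n * f (p n)"
    if "walk p n" "p 0 = x" "n \<le> diameter V E" for p n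
    using that by (force simp: sign_reversing_walk_def)
  obtain u v where uv: "E u v" "\<sigma> u v * f u * f v \<le> 0"
    using sign_change_edge_if_no_sign_reversing_walk[OF assms(1,2) _ none] by auto
  obtain p m where p: "walk p m" "p 0 = x" "p m = u" "m \<le> diameter V E"
    using walk_le_diameter[OF assms(1,2)] edge_in_V[OF uv(1)] by blast
  obtain q k where q: "walk q k" "q 0 = x" "q k = v" "k \<le> diameter V E"
    using walk_le_diameter[OF assms(1,2)] edge_in_V[OF uv(1)] by blast
  (* the closed walk x \<leadsto> u \<rightarrow> v \<leadsto> x has sign 1, so the signs of p and q differ by \<sigma> u v *)
  define w where "w = walk_join (p(Suc m := v)) (Suc m) (\<lambda>i. q (k - i))"
  have "walk w (Suc m + k)"
    unfolding w_def using walk_extend[OF p(1)] walk_rev[OF q(1)] p(3) q(3) uv(1)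
    by (intro walk_join) auto
  moreover have "w (Suc m + k) = w 0"
    using p(2) q(2,3) by (cases "k = 0") (auto simp: w_def walk_join_def)
  ultimately have "walk_sign w (Suc m + k) = 1"
    using balanced_closed_walk_sign[OF assms(3)] by blast
  moreover have "walk_sign w (Suc m + k) = walk_sign (p(Suc m := v)) (Suc m) * walk_sign (\<lambda>i. q (k - i)) k"
    unfolding w_def using q(3) by (intro walk_sign_join) simp
  ultimately have "walk_sign p m * \<sigma> u v * walk_sign q k = 1"
    using p(3) by (simp add: walk_sign_extend walk_sign_rev[OF q(1)])
  then have "walk_sign p m * walk_sign q k = \<sigma> u v"
    using sign_square[OF uv(1)] by (metis mult.assoc mult.commute mult_1)
  moreover have "0 < f x * walk_sign p m * f u" and "0 < f x * walk_sign q k * f v"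
    using pos[OF p(1,2,4)] pos[OF q(1,2,4)] p(3) q(3) by simp_all
  ultimately have "0 < (f x)\<^sup>2 * (\<sigma> u v * f u * f v)"
    using mult_pos_pos by (fastforce simp: power2_eq_square mult_ac)
  with uv(2) show False by (smt (verit) mult_nonneg_nonpos zero_le_power2)
qed

end

theorem theorem3p4:
  fixes V :: "'a set" and E :: "'a \<Rightarrow> 'a \<Rightarrow> bool" and \<sigma> :: "'a \<Rightarrow> 'a \<Rightarrow> real"
    and \<epsilon> K lam :: real and N :: ereal
  assumes "simple_graph V E" and "connected_graph V E" and "signature V E \<sigma>"
    and "\<epsilon> > 0" and "N > 0" and "N > ereal (4 / (2 + \<epsilon>)\<^sup>2)"
    and "CD V E \<sigma> K N"
    and "is_eigenvalue V E \<sigma> lam" and "lam \<noteq> 0"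
  shows "(lam \<ge> \<epsilon> / ((2 + \<epsilon>)\<^sup>2 - 4 * invN N) *
            (1 / (real (max_deg V E) * real (diameter V E + 1)
                  * real_of_int \<lceil>real (diameter V E + 1) / 2\<rceil>))
          + 2 * (2 + \<epsilon>) / ((2 + \<epsilon>)\<^sup>2 - 4 * invN N) * K) \<and>
         ((mult_ge2 V E \<sigma> lam \<or> balanced V E \<sigma>) \<longrightarrow>
         lam \<ge> \<epsilon> / ((2 + \<epsilon>)\<^sup>2 - 4 * invN N) *
            (1 / (real (max_deg V E) * real (diameter V E)
                  * real_of_int \<lceil>real (diameter V E) / 2\<rceil>))
          + 2 * (2 + \<epsilon>) / ((2 + \<epsilon>)\<^sup>2 - 4 * invN N) * K)"
proof -
  interpret signed_graph V E \<sigma> using assms(1,3) by unfold_locales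
  obtain f where f: "f \<in> eigenspace V E \<sigma> lam" "f \<noteq> (\<lambda>_. 0)"
    using assms(8) unfolding is_eigenvalue_def by blast
  interpret nontrivial_eigenfunction V E \<sigma> f lam using f assms(9) by unfold_locales
  have Q: "4 * invN N < (2 + \<epsilon>)\<^sup>2" using four_invN_less[OF assms(4,6)] .
  have "gap_bound \<epsilon> N K (max_deg V E) (diameter V E + 1) \<le> lam"
    using gap_bound_le_eigenvalue[OF assms(7,5,4) Q] sign_reversing_walk_le_Suc_diameter[OF assms(2)]
    by blast
  moreover have "gap_bound \<epsilon> N K (max_deg V E) (diameter V E) \<le> lam"
    if hyp: "mult_ge2 V E \<sigma> lam \<or> balanced V E \<sigma>"
  proof (cases "balanced V E \<sigma>")
    case True
    then show ?thesis using gap_bound_le_eigenvalue[OF assms(7,5,4) Q]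
        sign_reversing_walk_le_diameter_if_balanced[OF assms(2)] by blast
  next
    case False
    obtain z where "z \<in> V" using V_nonempty by blast
    have "mult_ge2 V E \<sigma> lam" using hyp False by blast
    then obtain h where h: "h \<in> eigenspace V E \<sigma> lam" "h \<noteq> (\<lambda>_. 0)" "h z = 0"
      by (rule mult_ge2_vanishing_eigenfunction)
    interpret h: nontrivial_eigenfunction V E \<sigma> h lam using h(1,2) assms(9) by unfold_locales
    have "\<forall>x\<in>V. \<exists>p n. p 0 = x \<and> n \<le> diameter V E \<and> sign_reversing_walk h p n"
      using sign_reversing_walk_to_zero[OF assms(2)] \<open>z \<in> V\<close> h(3) by blast
    then show ?thesis by (rule h.gap_bound_le_eigenvalue[OF assms(7,5,4) Q])
  qed
  ultimately show ?thesis unfolding gap_bound_def by blast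
qed

end
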